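(* The image $\mu_{\mathfrak a}(V)$ is a polyhedral, and the set $\{x\in V:\mu_{\mathfrak a}(\overline{A\cdot x})=\mu_{\mathfrak a}(V)\}$ is an open dense subset of $V$.
   Context: Let $V$ be a finite-dimensional real vector space with a scalar product $\langle\cdot,\cdot\rangle$. Let $G\subset\mathrm{GL}(V)$ be a connected closed subgroup, closed under transpose, with Lie algebra $\mathfrak g$, $G=K\exp(\mathfrak p)$ with $K=G\cap\mathrm O(V)$, $\mathfrak p=\mathfrak g\cap\mathrm{Sym}(V)$. Let $\mathfrak a\subset\mathfrak p$ be an Abelian subalgebra, $A=\exp(\mathfrak a)$, and $\mu_{\mathfrak a}:V\to\mathfrak a^*$, $\mu_{\mathfrak a}(x)(\xi)=\langle\xi x,x\rangle$. A polyhedral is an intersection of finitely many closed linear half-spaces. *)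

theory Defs
  imports "HOL-Analysis.Analysis"
begin

text \<open>V is modelled as real^'n with the standard scalar product; endomorphisms of V
  are matrices real^'n^'n, the transpose being the adjoint.\<close>

primrec mat_pow :: "real^'n^'n \<Rightarrow> nat \<Rightarrow> real^'n^'n" where
  "mat_pow M 0 = mat 1"
| "mat_pow M (Suc k) = M ** mat_pow M k"

definition mexp :: "real^'n^'n \<Rightarrow> real^'n^'n" where
  "mexp M = (\<Sum>k. (1 / fact k) *\<^sub>R mat_pow M k)"

text \<open>The dual space of a subspace a of matrices: linear functionals on a
  (normalised to vanish outside a).\<close>
definition dual_space :: "(real^'n^'n) set \<Rightarrow> (real^'n^'n \<Rightarrow> real) set" where
  "dual_space a = {f. (\<forall>\<xi>\<in>a. \<forall>\<eta>\<in>a. f (\<xi> + \<eta>) = f \<xi> + f \<eta>)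
                    \<and> (\<forall>\<xi>\<in>a. \<forall>c. f (c *\<^sub>R \<xi>) = c * f \<xi>)
                    \<and> (\<forall>\<xi>. \<xi> \<notin> a \<longrightarrow> f \<xi> = 0)}"

definition moment_map :: "(real^'n^'n) set \<Rightarrow> real^'n \<Rightarrow> (real^'n^'n \<Rightarrow> real)" where
  "moment_map a x = (\<lambda>\<xi>. if \<xi> \<in> a then (\<xi> *v x) \<bullet> x else 0)"

definition orbit_A :: "(real^'n^'n) set \<Rightarrow> real^'n \<Rightarrow> (real^'n) set" where
  "orbit_A a x = {mexp \<xi> *v x | \<xi>. \<xi> \<in> a}"

text \<open>Every linear functional on the finite-dimensional a* is evaluation at some xi in a,
  so a closed linear half-space of a* is {f. f xi <= 0} for some xi in a.\<close>
definition polyhedral_dual :: "(real^'n^'n) set \<Rightarrow> (real^'n^'n \<Rightarrow> real) set \<Rightarrow> bool" where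
  "polyhedral_dual a S \<longleftrightarrow>
     (\<exists>F. finite F \<and> F \<subseteq> a \<and> S = {f \<in> dual_space a. \<forall>\<xi>\<in>F. f \<xi> \<le> 0})"

end

theory Submission
  imports Defs
begin

text \<open>The commuting symmetric matrices in \<open>a\<close> have a common orthonormal eigenbasis \<open>B\<close>; write
  \<open>\<lambda>\<^sub>b(\<xi>) = \<langle>\<xi> b, b\<rangle> = \<xi> \<bullet> outer b\<close> for the weights. In these coordinates
  \<open>\<mu>(x) = \<Sum>\<^sub>b \<langle>b, x\<rangle>\<^sup>2 \<lambda>\<^sub>b\<close> and \<open>exp \<xi>\<close> multiplies the \<open>b\<close>-coordinate by \<open>e\<^bsup>\<lambda>\<^sub>b(\<xi>)\<^esup>\<close>.
  Hence \<open>\<mu>(V)\<close> is the convex cone generated by the finitely many weights, which is polyhedral,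
  and \<open>\<mu>\<close> maps the orbit closure of \<open>x\<close> into the cone generated by the weights of the
  support of \<open>x\<close>. Conversely, for positive coefficients \<open>d\<close> the point \<open>\<Sum> d\<^sub>b \<lambda>\<^sub>b\<close> is attained
  on the orbit, at a minimum of the coercive Kempf--Ness function
  \<open>\<xi> \<mapsto> \<Sum> \<langle>b, x\<rangle>\<^sup>2 e\<^bsup>2\<lambda>\<^sub>b(\<xi>)\<^esup> - 2 d\<^sub>b \<lambda>\<^sub>b(\<xi>)\<close>; the resulting orbit points stay bounded as
  \<open>d\<close> decreases to arbitrary nonnegative coefficients, so compactness gives the whole cone.
  Thus \<open>\<mu>(closure (A x)) = \<mu>(V)\<close> iff the support of \<open>x\<close> generates the full cone. This condition
  is open, since the support can only grow near \<open>x\<close>, and it holds on the dense set of points none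
  of whose coordinates vanishes.\<close>

section \<open>Simultaneous diagonalisation of commuting symmetric matrices\<close>

lemma symmetric_matrix_inner_commute:
  fixes M :: "real^'n^'n"
  assumes "transpose M = M"
  shows "(M *v u) \<bullet> v = u \<bullet> (M *v v)"
  by (metis assms dot_lmul_matrix transpose_matrix_vector)

lemma linear_coeff_zero_if_quadratic_nonneg:
  fixes \<alpha> \<beta> :: real
  assumes "0 \<le> \<alpha>" "0 \<le> \<beta>" and nonneg: "\<And>t. 0 \<le> 2 * t * \<alpha> + t\<^sup>2 * \<beta>"
  shows "\<alpha> = 0"
proof (rule ccontr)
  assume "\<alpha> \<noteq> 0"
  define s where "s = \<alpha> / (\<beta> + 1)"
  have "0 < s" "s * \<beta> \<le> \<alpha>"
    using assms(1,2) \<open>\<alpha> \<noteq> 0\<close> by (simp_all add: s_def field_simps)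
  then have "s * (s * \<beta> - 2 * \<alpha>) < 0"
    using \<open>\<alpha> \<noteq> 0\<close> assms(1) by (simp add: mult_pos_neg)
  moreover have "2 * (- s) * \<alpha> + (- s)\<^sup>2 * \<beta> = s * (s * \<beta> - 2 * \<alpha>)"
    by (simp add: algebra_simps power2_eq_square)
  ultimately show False
    using nonneg[of "- s"] by linarith
qed

lemma rayleigh_quotient_attains_max:
  fixes M :: "real^'n^'n"
  assumes "subspace S" "S \<noteq> {0}"
  obtains v where "v \<in> S" "norm v = 1"
    "\<And>u. u \<in> S \<Longrightarrow> u \<bullet> (M *v u) \<le> (v \<bullet> (M *v v)) * (u \<bullet> u)"
proof -
  define K where "K = S \<inter> sphere 0 1"
  have "compact K"
    unfolding K_def using assms(1) by (simp add: closed_subspace closed_Int_compact)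
  obtain w where "w \<in> S" "w \<noteq> 0"
    using assms subspace_0 by blast
  then have "(1 / norm w) *\<^sub>R w \<in> K"
    unfolding K_def using assms(1) by (simp add: subspace_scale)
  moreover have "continuous_on K (\<lambda>u. u \<bullet> (M *v u))"
    by (intro continuous_intros linear_continuous_on matrix_vector_mul_bounded_linear)
  ultimately obtain v where v: "v \<in> K" and max: "\<And>u. u \<in> K \<Longrightarrow> u \<bullet> (M *v u) \<le> v \<bullet> (M *v v)"
    using continuous_attains_sup[OF \<open>compact K\<close>] by blast
  have "u \<bullet> (M *v u) \<le> (v \<bullet> (M *v v)) * (u \<bullet> u)" if "u \<in> S" for u
  proof (cases "u = 0")
    case False
    have "(1 / norm u) *\<^sub>R u \<in> K"
      unfolding K_def using that False assms(1) by (simp add: subspace_scale)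
    from max[OF this] False show ?thesis
      by (simp add: matrix_vector_mult_scaleR field_simps power2_eq_square mult_ac
          flip: power2_norm_eq_inner)
  qed simp
  with v that show ?thesis
    by (auto simp: K_def)
qed

lemma symmetric_matrix_quadratic_form_add:
  fixes M :: "real^'n^'n"
  assumes "transpose M = M"
  shows "(v + t *\<^sub>R w) \<bullet> (M *v (v + t *\<^sub>R w))
    = v \<bullet> (M *v v) + 2 * t * (w \<bullet> (M *v v)) + t\<^sup>2 * (w \<bullet> (M *v w))"
  using symmetric_matrix_inner_commute[OF assms, of w v] inner_commute[of v "M *v w"]
  by (simp add: matrix_vector_right_distrib matrix_vector_mult_scaleR inner_add_left
      inner_add_right power2_eq_square distrib_left)

lemma symmetric_matrix_rayleigh_max_eigenvector:
  fixes M :: "real^'n^'n"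
  assumes sym: "transpose M = M" and S: "subspace S" and inv: "\<And>u. u \<in> S \<Longrightarrow> M *v u \<in> S"
    and v: "v \<in> S" "norm v = 1"
    and max: "\<And>u. u \<in> S \<Longrightarrow> u \<bullet> (M *v u) \<le> (v \<bullet> (M *v v)) * (u \<bullet> u)"
  shows "M *v v = (v \<bullet> (M *v v)) *\<^sub>R v"
proof -
  define c where "c = v \<bullet> (M *v v)"
  define \<phi> where "\<phi> u = c * (u \<bullet> u) - u \<bullet> (M *v u)" for u
  define w where "w = c *\<^sub>R v - M *v v"
  have "w \<in> S"
    unfolding w_def using v(1) inv S by (simp add: subspace_diff subspace_scale)
  have \<phi>_nonneg: "0 \<le> \<phi> u" if "u \<in> S" for u
    using max[OF that] by (simp add: \<phi>_def c_def)
  \<comment> \<open>\<open>\<phi>\<close> is a nonnegative quadratic form on \<open>S\<close> vanishing at \<open>v\<close>, so its polar form vanishes there.\<close>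
  have polar: "\<phi> (v + t *\<^sub>R w) = 2 * t * (w \<bullet> w) + t\<^sup>2 * \<phi> w" for t
  proof -
    have "v \<bullet> v = 1"
      using v(2) by (simp add: norm_eq_1)
    have "(v + t *\<^sub>R w) \<bullet> (M *v (v + t *\<^sub>R w))
        = c + 2 * t * (w \<bullet> (M *v v)) + t\<^sup>2 * (w \<bullet> (M *v w))"
      unfolding c_def by (rule symmetric_matrix_quadratic_form_add[OF sym])
    moreover have "(v + t *\<^sub>R w) \<bullet> (v + t *\<^sub>R w) = 1 + 2 * t * (v \<bullet> w) + t\<^sup>2 * (w \<bullet> w)"
      using \<open>v \<bullet> v = 1\<close>
      by (simp add: inner_add_left inner_add_right inner_commute[of w v] power2_eq_square algebra_simps)
    moreover have "w \<bullet> w = c * (v \<bullet> w) - w \<bullet> (M *v v)"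
      using inner_diff_right[of w "c *\<^sub>R v" "M *v v"] by (simp add: inner_commute[of w v] flip: w_def)
    ultimately show ?thesis
      unfolding \<phi>_def by algebra
  qed
  have "w \<bullet> w = 0"
  proof (rule linear_coeff_zero_if_quadratic_nonneg)
    show "0 \<le> \<phi> w"
      using \<phi>_nonneg \<open>w \<in> S\<close> .
    fix t
    have "v + t *\<^sub>R w \<in> S"
      using S v(1) \<open>w \<in> S\<close> by (simp add: subspace_add subspace_scale)
    then show "0 \<le> 2 * t * (w \<bullet> w) + t\<^sup>2 * \<phi> w"
      using \<phi>_nonneg polar by metis
  qed simp
  then show ?thesis
    by (simp add: w_def c_def)
qed

lemma symmetric_matrix_eigenvector_in_invariant_subspace:
  fixes M :: "real^'n^'n"
  assumes "transpose M = M" "subspace S" "\<And>u. u \<in> S \<Longrightarrow> M *v u \<in> S" "S \<noteq> {0}"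
  obtains v c where "v \<in> S" "v \<noteq> 0" "M *v v = c *\<^sub>R v"
proof -
  obtain v where "v \<in> S" "norm v = 1"
    "\<And>u. u \<in> S \<Longrightarrow> u \<bullet> (M *v u) \<le> (v \<bullet> (M *v v)) * (u \<bullet> u)"
    using rayleigh_quotient_attains_max[OF assms(2,4)] by blast
  with symmetric_matrix_rayleigh_max_eigenvector[OF assms(1-3)] that show ?thesis
    by fastforce
qed

lemma orthonormal_basis_Un_orthogonal_complement:
  fixes E S :: "'a::euclidean_space set"
  assumes "subspace E" "E \<subseteq> S" "subspace S"
    and BE: "pairwise orthogonal BE" "span BE = E"
    and BF: "pairwise orthogonal BF" "span BF = {u \<in> S. \<forall>e\<in>E. e \<bullet> u = 0}"
  shows "pairwise orthogonal (BE \<union> BF)" "span (BE \<union> BF) = S"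
proof -
  have "BE \<subseteq> E" "BF \<subseteq> {u \<in> S. \<forall>e\<in>E. e \<bullet> u = 0}"
    using span_superset BE(2) BF(2) by blast+
  then show "pairwise orthogonal (BE \<union> BF)"
    using BE(1) BF(1) by (fastforce simp: pairwise_def orthogonal_def inner_commute)
  have "u \<in> span (BE \<union> BF)" if "u \<in> S" for u
  proof -
    obtain y z where "y \<in> span E" "\<And>w. w \<in> span E \<Longrightarrow> orthogonal z w" "u = y + z"
      using orthogonal_subspace_decomp_exists by metis
    moreover have "z \<in> S"
      using \<open>y \<in> span E\<close> \<open>u = y + z\<close> that assms(1-3)
      by (metis add_diff_cancel_left' span_eq_iff subsetD subspace_diff)
    moreover have "span E = E"
      using assms(1) by (simp add: span_eq_iff)
    ultimately have "y \<in> E" "z \<in> {u \<in> S. \<forall>e\<in>E. e \<bullet> u = 0}"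
      by (auto simp: orthogonal_def inner_commute)
    then have "y \<in> span BE" "z \<in> span BF"
      using BE(2) BF(2) by auto
    then show ?thesis
      using \<open>u = y + z\<close> by (meson span_add span_mono subsetD sup_ge1 sup_ge2)
  qed
  moreover have "span (BE \<union> BF) \<subseteq> S"
    using \<open>BE \<subseteq> E\<close> \<open>BF \<subseteq> _\<close> assms(2,3) by (intro span_minimal) auto
  ultimately show "span (BE \<union> BF) = S"
    by blast
qed

lemma commuting_eigenspace_invariant:
  fixes a :: "(real^'n^'n) set"
  assumes "\<forall>\<xi>\<in>a. \<xi> ** M = M ** \<xi>" "\<forall>\<xi>\<in>a. \<forall>u\<in>S. \<xi> *v u \<in> S"
  shows "\<forall>\<xi>\<in>a. \<forall>u\<in>{u\<in>S. M *v u = c *\<^sub>R u}. \<xi> *v u \<in> {u\<in>S. M *v u = c *\<^sub>R u}"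
proof (intro ballI)
  fix \<xi> u assume "\<xi> \<in> a" "u \<in> {u\<in>S. M *v u = c *\<^sub>R u}"
  moreover have "M *v (\<xi> *v u) = \<xi> *v (M *v u)"
    using assms(1) \<open>\<xi> \<in> a\<close> by (simp add: matrix_vector_mul_assoc)
  ultimately show "\<xi> *v u \<in> {u\<in>S. M *v u = c *\<^sub>R u}"
    using assms(2) by (simp add: matrix_vector_mult_scaleR)
qed

lemma symmetric_orthogonal_complement_invariant:
  fixes a :: "(real^'n^'n) set"
  assumes "\<forall>\<xi>\<in>a. transpose \<xi> = \<xi>" "\<forall>\<xi>\<in>a. \<forall>u\<in>S. \<xi> *v u \<in> S" "\<forall>\<xi>\<in>a. \<forall>u\<in>E. \<xi> *v u \<in> E"
  shows "\<forall>\<xi>\<in>a. \<forall>u\<in>{u\<in>S. \<forall>e\<in>E. e \<bullet> u = 0}. \<xi> *v u \<in> {u\<in>S. \<forall>e\<in>E. e \<bullet> u = 0}"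
proof (intro ballI)
  fix \<xi> u assume "\<xi> \<in> a" "u \<in> {u\<in>S. \<forall>e\<in>E. e \<bullet> u = 0}"
  moreover have "e \<bullet> (\<xi> *v u) = (\<xi> *v e) \<bullet> u" for e
    using symmetric_matrix_inner_commute[of \<xi> e u] assms(1) \<open>\<xi> \<in> a\<close> by simp
  ultimately show "\<xi> *v u \<in> {u\<in>S. \<forall>e\<in>E. e \<bullet> u = 0}"
    using assms(2,3) by auto
qed

lemma commuting_symmetric_invariant_splitting:
  fixes a :: "(real^'n^'n) set"
  assumes sym: "\<forall>\<xi>\<in>a. transpose \<xi> = \<xi>" and comm: "\<forall>\<xi>\<in>a. \<forall>\<eta>\<in>a. \<xi> ** \<eta> = \<eta> ** \<xi>"
    and S: "subspace S" and inv: "\<forall>\<xi>\<in>a. \<forall>u\<in>S. \<xi> *v u \<in> S"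
    and "\<xi>\<^sub>0 \<in> a" and not_scalar: "\<And>c. \<exists>u\<in>S. \<xi>\<^sub>0 *v u \<noteq> c *\<^sub>R u"
  obtains E where "subspace E" "E \<subset> S" "\<forall>\<xi>\<in>a. \<forall>u\<in>E. \<xi> *v u \<in> E"
    "subspace {u\<in>S. \<forall>e\<in>E. e \<bullet> u = 0}" "{u\<in>S. \<forall>e\<in>E. e \<bullet> u = 0} \<subset> S"
    "\<forall>\<xi>\<in>a. \<forall>u\<in>{u\<in>S. \<forall>e\<in>E. e \<bullet> u = 0}. \<xi> *v u \<in> {u\<in>S. \<forall>e\<in>E. e \<bullet> u = 0}"
proof -
  obtain v c where v: "v \<in> S" "v \<noteq> 0" "\<xi>\<^sub>0 *v v = c *\<^sub>R v"
    using symmetric_matrix_eigenvector_in_invariant_subspace[of \<xi>\<^sub>0 S] sym S inv not_scalar[of 0] \<open>\<xi>\<^sub>0 \<in> a\<close>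
    by force
  define E where "E = {u\<in>S. \<xi>\<^sub>0 *v u = c *\<^sub>R u}"
  define F where "F = {u\<in>S. \<forall>e\<in>E. e \<bullet> u = 0}"
  have "subspace E"
    unfolding E_def subspace_def using S
    by (auto simp: subspace_add subspace_scale subspace_0 matrix_vector_right_distrib
        matrix_vector_mult_scaleR scaleR_add_right)
  moreover have "E \<subset> S"
    using not_scalar[of c] by (auto simp: E_def)
  moreover have inv_E: "\<forall>\<xi>\<in>a. \<forall>u\<in>E. \<xi> *v u \<in> E"
    unfolding E_def using comm \<open>\<xi>\<^sub>0 \<in> a\<close> inv by (intro commuting_eigenspace_invariant) auto
  moreover have "subspace F"
    unfolding F_def subspace_def using S
    by (auto simp: subspace_add subspace_scale subspace_0 inner_add_right)
  moreover have "v \<notin> F"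
    using v by (force simp: E_def F_def)
  then have "F \<subset> S"
    using v(1) by (auto simp: F_def)
  moreover have "\<forall>\<xi>\<in>a. \<forall>u\<in>F. \<xi> *v u \<in> F"
    unfolding F_def using sym inv inv_E by (rule symmetric_orthogonal_complement_invariant)
  ultimately show ?thesis
    unfolding F_def by (rule that)
qed

lemma commuting_symmetric_matrices_eigenbasis_subspace:
  fixes a :: "(real^'n^'n) set"
  assumes sym: "\<forall>\<xi>\<in>a. transpose \<xi> = \<xi>" and comm: "\<forall>\<xi>\<in>a. \<forall>\<eta>\<in>a. \<xi> ** \<eta> = \<eta> ** \<xi>"
  shows "subspace S \<Longrightarrow> \<forall>\<xi>\<in>a. \<forall>u\<in>S. \<xi> *v u \<in> S \<Longrightarrow>
    \<exists>B. pairwise orthogonal B \<and> (\<forall>b\<in>B. norm b = 1) \<and> span B = S \<and>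
        (\<forall>b\<in>B. \<forall>\<xi>\<in>a. \<exists>c. \<xi> *v b = c *\<^sub>R b)"
proof (induction "dim S" arbitrary: S rule: less_induct)
  case less
  note S = less.prems(1) and inv = less.prems(2)
  show ?case
  proof (cases "\<forall>\<xi>\<in>a. \<exists>c. \<forall>u\<in>S. \<xi> *v u = c *\<^sub>R u")
    case True
    obtain B where "pairwise orthogonal B" "\<And>x. x \<in> B \<Longrightarrow> norm x = 1" "span B = S" "B \<subseteq> S"
      using orthonormal_basis_subspace[OF S] by metis
    with True show ?thesis
      by blast
  next
    case False
    then obtain \<xi>\<^sub>0 where "\<xi>\<^sub>0 \<in> a" and not_scalar: "\<And>c. \<exists>u\<in>S. \<xi>\<^sub>0 *v u \<noteq> c *\<^sub>R u"
      by blast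
    obtain E where E: "subspace E" "E \<subset> S" "\<forall>\<xi>\<in>a. \<forall>u\<in>E. \<xi> *v u \<in> E"
      and F: "subspace {u\<in>S. \<forall>e\<in>E. e \<bullet> u = 0}" "{u\<in>S. \<forall>e\<in>E. e \<bullet> u = 0} \<subset> S"
        "\<forall>\<xi>\<in>a. \<forall>u\<in>{u\<in>S. \<forall>e\<in>E. e \<bullet> u = 0}. \<xi> *v u \<in> {u\<in>S. \<forall>e\<in>E. e \<bullet> u = 0}"
      by (rule commuting_symmetric_invariant_splitting[OF sym comm S inv \<open>\<xi>\<^sub>0 \<in> a\<close> not_scalar])
    define F where "F = {u\<in>S. \<forall>e\<in>E. e \<bullet> u = 0}"
    have "F \<subset> S"
      using F(2) by (simp add: F_def)
    moreover have "span E = E" "span F = F" "span S = S"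
      using E(1) F(1) S by (simp_all add: F_def span_eq_iff)
    ultimately have "dim E < dim S" "dim F < dim S"
      using E(2) by (metis dim_psubset)+
    obtain BE where
      BE: "pairwise orthogonal BE" "\<forall>b\<in>BE. norm b = 1" "span BE = E" "\<forall>b\<in>BE. \<forall>\<xi>\<in>a. \<exists>c. \<xi> *v b = c *\<^sub>R b"
      using less.hyps[OF \<open>dim E < dim S\<close> E(1,3)] by blast
    obtain BF where
      BF: "pairwise orthogonal BF" "\<forall>b\<in>BF. norm b = 1" "span BF = F" "\<forall>b\<in>BF. \<forall>\<xi>\<in>a. \<exists>c. \<xi> *v b = c *\<^sub>R b"
      using less.hyps[OF \<open>dim F < dim S\<close>] F(1,3) unfolding F_def by blast
    have "pairwise orthogonal (BE \<union> BF)" "span (BE \<union> BF) = S"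
      using orthonormal_basis_Un_orthogonal_complement[OF E(1) _ S BE(1,3) BF(1)] E(2) BF(3)
      by (simp_all add: F_def)
    with BE BF show ?thesis
      by (intro exI[of _ "BE \<union> BF"]) blast
  qed
qed

lemma commuting_symmetric_matrices_eigenbasis:
  fixes a :: "(real^'n^'n) set"
  assumes "\<forall>\<xi>\<in>a. transpose \<xi> = \<xi>" "\<forall>\<xi>\<in>a. \<forall>\<eta>\<in>a. \<xi> ** \<eta> = \<eta> ** \<xi>"
  obtains B where "pairwise orthogonal B" "\<forall>b\<in>B. norm b = 1" "span B = UNIV"
    "\<forall>b\<in>B. \<forall>\<xi>\<in>a. \<exists>c. \<xi> *v b = c *\<^sub>R b"
  using commuting_symmetric_matrices_eigenbasis_subspace[OF assms, of UNIV] by auto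

section \<open>Functionals on a subspace and polyhedral cones\<close>

definition outer :: "real^'n \<Rightarrow> real^'n^'n" where
  "outer x = (\<chi> i j. x$i * x$j)"

lemma outer_mult_vec: "outer b *v x = (b \<bullet> x) *\<^sub>R b"
  by (simp add: outer_def matrix_vector_mult_def inner_vec_def vec_eq_iff sum_distrib_left mult_ac)

lemma inner_outer: "\<xi> \<bullet> outer x = (\<xi> *v x) \<bullet> x"
  by (simp add: outer_def inner_vec_def matrix_vector_mult_def sum_distrib_right sum_distrib_left mult_ac)

lemma sum_matrix_vector_mult: "(\<Sum>i\<in>I. f i) *v x = (\<Sum>i\<in>I. f i *v x)"
  by (induction I rule: infinite_finite_induct) (simp_all add: matrix_vector_mult_add_rdistrib)

lemma tendsto_moment_map:
  "(y \<longlongrightarrow> l) F \<Longrightarrow> ((\<lambda>k. moment_map a (y k) \<eta>) \<longlongrightarrow> moment_map a l \<eta>) F"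
  unfolding moment_map_def
  by (cases "\<eta> \<in> a") (simp_all add: tendsto_intros bounded_linear.tendsto[OF matrix_vector_mul_bounded_linear])

definition restrict_functional :: "(real^'n^'n) set \<Rightarrow> real^'n^'n \<Rightarrow> real^'n^'n \<Rightarrow> real" where
  "restrict_functional a z = (\<lambda>\<xi>. if \<xi> \<in> a then z \<bullet> \<xi> else 0)"

lemma moment_map_eq_restrict_outer: "moment_map a x = restrict_functional a (outer x)"
proof -
  have "outer x \<bullet> \<xi> = (\<xi> *v x) \<bullet> x" for \<xi>
    by (metis inner_commute inner_outer)
  then show ?thesis
    by (auto simp: moment_map_def restrict_functional_def fun_eq_iff)
qed

lemma restrict_functional_eq_iff:
  "restrict_functional a z = restrict_functional a w \<longleftrightarrow> (\<forall>\<xi>\<in>a. z \<bullet> \<xi> = w \<bullet> \<xi>)"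
  by (auto simp: restrict_functional_def fun_eq_iff)

lemma restrict_functional_in_dual_space:
  "subspace a \<Longrightarrow> restrict_functional a z \<in> dual_space a"
  by (auto simp: restrict_functional_def dual_space_def inner_add_right subspace_add subspace_scale)

lemma dual_space_zero:
  assumes "f \<in> dual_space a" "subspace a"
  shows "f 0 = 0"
proof -
  have "f (0 *\<^sub>R 0) = 0 * f 0"
    using assms subspace_0 unfolding dual_space_def by blast
  then show ?thesis
    by simp
qed

lemma dual_space_sum:
  assumes "f \<in> dual_space a" "subspace a" "\<forall>i\<in>I. g i \<in> a"
  shows "f (\<Sum>i\<in>I. c i *\<^sub>R g i) = (\<Sum>i\<in>I. c i * f (g i))"
  using assms(3)
proof (induction I rule: infinite_finite_induct)
  case (insert i I)
  then have "(\<Sum>i\<in>I. c i *\<^sub>R g i) \<in> a" "c i *\<^sub>R g i \<in> a"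
    using assms(2) by (auto intro!: subspace_sum subspace_scale)
  with insert assms(1) show ?case
    by (simp add: dual_space_def)
qed (use dual_space_zero[OF assms(1,2)] in simp_all)

lemma dual_space_eq_restrict_functional:
  assumes "subspace a" "f \<in> dual_space a"
  obtains r where "r \<in> a" "f = restrict_functional a r"
proof -
  obtain E where E: "E \<subseteq> a" "pairwise orthogonal E" "\<And>e. e \<in> E \<Longrightarrow> norm e = 1" "span E = a"
    using orthonormal_basis_subspace[OF assms(1)] by metis
  then have "finite E"
    using pairwise_orthogonal_imp_finite by blast
  define r where "r = (\<Sum>e\<in>E. f e *\<^sub>R e)"
  have "r \<in> a"
    unfolding r_def using E(1) assms(1) by (auto intro!: subspace_sum subspace_scale)
  moreover have "f \<xi> = r \<bullet> \<xi>" if "\<xi> \<in> a" for \<xi>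
  proof -
    have "f \<xi> = f (\<Sum>e\<in>E. (\<xi> \<bullet> e) *\<^sub>R e)"
      using orthonormal_basis_expand[OF E(2,3) _ \<open>finite E\<close>, of \<xi>] that E(4) by simp
    also have "\<dots> = (\<Sum>e\<in>E. (\<xi> \<bullet> e) * f e)"
      by (rule dual_space_sum[OF assms(2,1)]) (use E(1) in blast)
    also have "\<dots> = r \<bullet> \<xi>"
      by (simp add: r_def inner_sum_left inner_commute[of \<xi>] mult.commute)
    finally show ?thesis .
  qed
  moreover have "f \<xi> = 0" if "\<xi> \<notin> a" for \<xi>
    using assms(2) that by (simp add: dual_space_def)
  ultimately show ?thesis
    using that by (auto simp: restrict_functional_def fun_eq_iff)
qed

lemma subspace_inner_representative:
  fixes a :: "'a::euclidean_space set"
  assumes "subspace a"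
  shows "\<exists>p\<in>a. \<forall>\<xi>\<in>a. z \<bullet> \<xi> = p \<bullet> \<xi>"
proof -
  obtain p q where "p \<in> span a" and q: "\<And>w. w \<in> span a \<Longrightarrow> orthogonal q w" and "z = p + q"
    using orthogonal_subspace_decomp_exists by metis
  moreover have "p \<in> a"
    using assms \<open>p \<in> span a\<close> span_eq_iff by blast
  moreover have "q \<bullet> \<xi> = 0" if "\<xi> \<in> a" for \<xi>
    using q that span_superset by (auto simp: orthogonal_def)
  ultimately show ?thesis
    by (auto simp: inner_add_left)
qed

lemma convex_cone_nonneg_combinations:
  fixes f :: "'k \<Rightarrow> 'a::real_vector"
  shows "convex_cone {\<Sum>k\<in>K. u k *\<^sub>R f k | u :: 'k \<Rightarrow> real. \<forall>k\<in>K. 0 \<le> u k}"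
    (is "convex_cone ?D")
  unfolding convex_cone_iff
proof (intro conjI ballI allI impI)
  show "0 \<in> ?D"
    by (intro CollectI exI[of _ "\<lambda>_. 0"]) simp
  fix y z assume "y \<in> ?D" "z \<in> ?D"
  then obtain u v where "\<forall>k\<in>K. 0 \<le> u k" "y = (\<Sum>k\<in>K. u k *\<^sub>R f k)"
    "\<forall>k\<in>K. 0 \<le> v k" "z = (\<Sum>k\<in>K. v k *\<^sub>R f k)"
    by blast
  then show "y + z \<in> ?D"
    by (intro CollectI exI[of _ "\<lambda>k. u k + v k"]) (simp add: scaleR_add_left sum.distrib)
next
  fix y and c :: real assume "y \<in> ?D" "0 \<le> c"
  then obtain u where "\<forall>k\<in>K. 0 \<le> u k" "y = (\<Sum>k\<in>K. u k *\<^sub>R f k)"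
    by blast
  with \<open>0 \<le> c\<close> show "c *\<^sub>R y \<in> ?D"
    by (intro CollectI exI[of _ "\<lambda>k. c * u k"]) (simp add: scaleR_sum_right)
qed

lemma nonneg_combination_in_convex_cone_hull:
  fixes f :: "'k \<Rightarrow> 'a::real_vector"
  assumes "\<forall>k\<in>K. 0 \<le> u k"
  shows "(\<Sum>k\<in>K. u k *\<^sub>R f k) \<in> convex_cone hull (f ` K)"
  using assms
proof (induction K rule: infinite_finite_induct)
  case (insert k K)
  then have "(\<Sum>k\<in>K. u k *\<^sub>R f k) \<in> convex_cone hull (f ` insert k K)"
    using hull_mono[of "f ` K" "f ` insert k K"] by auto
  moreover have "u k *\<^sub>R f k \<in> convex_cone hull (f ` insert k K)"
    using insert.prems by (simp add: convex_cone_hull_mul hull_inc)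
  ultimately show ?case
    using insert.hyps by (simp add: convex_cone_hull_add)
qed (simp_all add: convex_cone_hull_contains_0)

lemma convex_cone_hull_image_finite:
  fixes f :: "'k \<Rightarrow> 'a::real_vector"
  assumes "finite K"
  shows "convex_cone hull (f ` K) = {\<Sum>k\<in>K. u k *\<^sub>R f k | u :: 'k \<Rightarrow> real. \<forall>k\<in>K. 0 \<le> u k}"
    (is "_ = ?D")
proof
  have "f k \<in> ?D" if "k \<in> K" for k
  proof -
    have "(\<Sum>k'\<in>K. (if k' = k then 1 else 0) *\<^sub>R f k') = (\<Sum>k'\<in>K. if k' = k then f k' else 0)"
      by (intro sum.cong) auto
    with that assms have "f k = (\<Sum>k'\<in>K. (if k' = k then 1 else 0) *\<^sub>R f k')"
      by simp
    then show ?thesis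
      by (intro CollectI exI[of _ "\<lambda>k'. if k' = k then 1 else 0"]) auto
  qed
  then show "convex_cone hull (f ` K) \<subseteq> ?D"
    using convex_cone_nonneg_combinations by (intro hull_minimal) auto
  show "?D \<subseteq> convex_cone hull (f ` K)"
    using nonneg_combination_in_convex_cone_hull by blast
qed

lemma polyhedron_convex_cone_eq_halfspaces:
  fixes C :: "'a::euclidean_space set"
  assumes "polyhedron C" "convex_cone C"
  obtains F where "finite F" "C = {z. \<forall>v\<in>F. v \<bullet> z \<le> 0}"
proof -
  obtain H where "finite H" "C = \<Inter>H" and H: "\<forall>h\<in>H. \<exists>v b. v \<noteq> 0 \<and> h = {x. v \<bullet> x \<le> b}"
    using assms(1) unfolding polyhedron_def by blast
  then obtain v b where vb: "\<And>h x. h \<in> H \<Longrightarrow> x \<in> h \<longleftrightarrow> v h \<bullet> x \<le> b h"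
    by (metis mem_Collect_eq)
  have "0 \<in> C"
    using assms(2) by (rule convex_cone_contains_0)
  then have "0 \<le> b h" if "h \<in> H" for h
    using vb[OF that, of 0] \<open>C = \<Inter>H\<close> that by auto
  \<comment> \<open>a cone meeting \<open>{x. v h \<bullet> x > 0}\<close> is unbounded in the direction \<open>v h\<close>\<close>
  moreover have "v h \<bullet> z \<le> 0" if "h \<in> H" "z \<in> C" for h z
  proof (rule ccontr)
    assume "\<not> v h \<bullet> z \<le> 0"
    moreover have "((\<bar>b h\<bar> + 1) / (v h \<bullet> z)) *\<^sub>R z \<in> h"
      using \<open>z \<in> C\<close> assms(2) \<open>\<not> v h \<bullet> z \<le> 0\<close> \<open>C = \<Inter>H\<close> that(1) by (simp add: convex_cone_iff)
    ultimately show False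
      using vb[OF that(1)] by simp
  qed
  ultimately have "C = {z. \<forall>w\<in>v ` H. w \<bullet> z \<le> 0}"
    using vb \<open>C = \<Inter>H\<close> by fastforce
  with \<open>finite H\<close> that show ?thesis
    by blast
qed

lemma subspace_projection_exists:
  fixes a :: "'a::euclidean_space set"
  assumes "subspace a"
  obtains p where "\<And>s. p s \<in> a" "\<And>s \<xi>. \<xi> \<in> a \<Longrightarrow> s \<bullet> \<xi> = p s \<bullet> \<xi>"
proof -
  have "\<forall>s. \<exists>q. q \<in> a \<and> (\<forall>\<xi>\<in>a. s \<bullet> \<xi> = q \<bullet> \<xi>)"
    using subspace_inner_representative[OF assms] by blast
  then have "\<exists>p. \<forall>s. p s \<in> a \<and> (\<forall>\<xi>\<in>a. s \<bullet> \<xi> = p s \<bullet> \<xi>)"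
    by (rule choice)
  with that show ?thesis
    by blast
qed

lemma polyhedral_dual_restrict_halfspace_cone:
  assumes "subspace a" "finite F" "C \<subseteq> a" and C: "C = {z. \<forall>v\<in>F. v \<bullet> z \<le> 0}"
  shows "polyhedral_dual a (restrict_functional a ` C)"
proof -
  obtain p where p_in: "\<And>s. p s \<in> a" and p_inner: "\<And>s \<xi>. \<xi> \<in> a \<Longrightarrow> s \<bullet> \<xi> = p s \<bullet> \<xi>"
    using subspace_projection_exists[OF assms(1)] by blast
  have C_iff: "z \<in> C \<longleftrightarrow> (\<forall>v\<in>F. restrict_functional a z (p v) \<le> 0)" if "z \<in> a" for z
    using p_in by (simp add: C restrict_functional_def inner_commute[of z] p_inner[OF that, symmetric])
  have "restrict_functional a ` C = {f \<in> dual_space a. \<forall>\<xi>\<in>p ` F. f \<xi> \<le> 0}"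
  proof (intro equalityI subsetI)
    fix f assume "f \<in> restrict_functional a ` C"
    then obtain z where "z \<in> C" "f = restrict_functional a z"
      by blast
    then show "f \<in> {f \<in> dual_space a. \<forall>\<xi>\<in>p ` F. f \<xi> \<le> 0}"
      using C_iff[of z] \<open>C \<subseteq> a\<close> restrict_functional_in_dual_space[OF assms(1)] by auto
  next
    fix f assume f: "f \<in> {f \<in> dual_space a. \<forall>\<xi>\<in>p ` F. f \<xi> \<le> 0}"
    then have "f \<in> dual_space a"
      by simp
    then obtain r where "r \<in> a" "f = restrict_functional a r"
      by (rule dual_space_eq_restrict_functional[OF assms(1)])
    with f show "f \<in> restrict_functional a ` C"
      using C_iff[of r] by auto
  qed
  moreover have "finite (p ` F)" "p ` F \<subseteq> a"
    using \<open>finite F\<close> p_in by auto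
  ultimately show ?thesis
    unfolding polyhedral_dual_def by blast
qed

lemma polyhedral_dual_restrict_convex_cone_hull:
  assumes "subspace a" "finite S"
  shows "polyhedral_dual a (restrict_functional a ` (convex_cone hull S))"
proof -
  obtain p where p_in: "\<And>s. p s \<in> a" and p_inner: "\<And>s \<xi>. \<xi> \<in> a \<Longrightarrow> s \<bullet> \<xi> = p s \<bullet> \<xi>"
    using subspace_projection_exists[OF assms(1)] by blast
  define C where "C = convex_cone hull (p ` S)"
  have "restrict_functional a ` (convex_cone hull S) = restrict_functional a ` C"
  proof -
    have "convex_cone hull S = {\<Sum>s\<in>S. u s *\<^sub>R s | u. \<forall>s\<in>S. 0 \<le> u s}"
      using convex_cone_hull_image_finite[OF assms(2), of "\<lambda>s. s"] by simp
    moreover have "C = {\<Sum>s\<in>S. u s *\<^sub>R p s | u. \<forall>s\<in>S. 0 \<le> u s}"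
      unfolding C_def by (rule convex_cone_hull_image_finite[OF assms(2)])
    moreover have res_eq: "restrict_functional a (\<Sum>s\<in>S. u s *\<^sub>R s) = restrict_functional a (\<Sum>s\<in>S. u s *\<^sub>R p s)" for u
      by (simp add: restrict_functional_eq_iff inner_sum_left p_inner[symmetric])
    ultimately show ?thesis
      by (simp add: setcompr_eq_image image_image res_eq)
  qed
  moreover have "C \<subseteq> a"
    unfolding C_def using p_in assms(1) by (intro hull_minimal) (auto simp: subspace_imp_convex_cone)
  moreover have "polyhedron C" "convex_cone C"
    unfolding C_def using assms(2) by (simp_all add: polyhedron_convex_cone_hull convex_cone_convex_cone_hull)
  then obtain F where "finite F" "C = {z. \<forall>v\<in>F. v \<bullet> z \<le> 0}"
    by (rule polyhedron_convex_cone_eq_halfspaces)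
  ultimately show ?thesis
    using polyhedral_dual_restrict_halfspace_cone[OF assms(1) \<open>finite F\<close> \<open>C \<subseteq> a\<close>] by simp
qed

section \<open>Coercivity and density\<close>

lemma exp_minus_linear_lower_bound:
  fixes m d s :: real
  assumes "0 < m" "0 \<le> d"
  shows "m * exp (2 * s) / 2 - 2 * d\<^sup>2 / m \<le> m * exp (2 * s) - 2 * d * s"
proof (cases "s \<le> 0")
  case True
  then have "d * s \<le> 0"
    using assms(2) by (simp add: mult_nonneg_nonpos)
  moreover have "0 \<le> d\<^sup>2 / m" "0 \<le> m * exp (2 * s)"
    using assms(1) by simp_all
  ultimately show ?thesis
    by linarith
next
  case False
  \<comment> \<open>\<open>exp (2 s) \<ge> s\<^sup>2\<close> and then complete the square\<close>
  have "s \<le> exp s"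
    using exp_ge_add_one_self[of s] by linarith
  then have "s\<^sup>2 \<le> (exp s)\<^sup>2"
    using False by (intro power_mono) simp_all
  then have "m * s\<^sup>2 / 2 \<le> m * exp (2 * s) / 2"
    using assms(1) by (simp add: exp_double)
  moreover have "m * s\<^sup>2 / 2 - 2 * d * s + 2 * d\<^sup>2 / m = (m * s - 2 * d)\<^sup>2 / (2 * m)"
    using assms(1) by (simp add: field_simps power2_eq_square)
  moreover have "0 \<le> (m * s - 2 * d)\<^sup>2 / (2 * m)"
    using assms(1) by simp
  ultimately show ?thesis
    by linarith
qed

lemma exp_minus_linear_sublevel_bounded:
  fixes m d M :: real
  assumes "0 < m" "0 < d"
  shows "\<exists>R. \<forall>s. m * exp (2 * s) - 2 * d * s \<le> M \<longrightarrow> \<bar>s\<bar> \<le> R"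
proof -
  define Q where "Q = 2 * (M + 2 * d\<^sup>2 / m) / m"
  have "\<bar>s\<bar> \<le> \<bar>M\<bar> / (2 * d) + \<bar>Q\<bar>" if s: "m * exp (2 * s) - 2 * d * s \<le> M" for s
  proof -
    have "0 < m * exp (2 * s)"
      using assms(1) by simp
    then have "- s * (2 * d) \<le> \<bar>M\<bar>"
      using s abs_ge_self[of M] by (simp add: algebra_simps)
    then have "- s \<le> \<bar>M\<bar> / (2 * d)"
      using assms(2) by (simp add: pos_le_divide_eq)
    moreover have "m * exp (2 * s) / 2 \<le> M + 2 * d\<^sup>2 / m"
      using exp_minus_linear_lower_bound[OF assms(1) less_imp_le[OF assms(2)], of s] s by linarith
    then have "exp (2 * s) \<le> Q"
      unfolding Q_def using assms(1) by (simp add: field_simps)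
    moreover have "1 + 2 * s \<le> exp (2 * s)" "0 < exp (2 * s)"
      by (simp_all add: exp_ge_add_one_self)
    ultimately show ?thesis
      by linarith
  qed
  then show ?thesis
    by blast
qed

lemma continuous_attains_inf_sublevel:
  fixes f :: "'a::heine_borel \<Rightarrow> real"
  assumes "closed S" "continuous_on S f" "x\<^sub>0 \<in> S" "bounded {x\<in>S. f x \<le> f x\<^sub>0}"
  obtains x where "x \<in> S" "\<And>y. y \<in> S \<Longrightarrow> f x \<le> f y"
proof -
  define K where "K = {x\<in>S. f x \<le> f x\<^sub>0}"
  have "closed K"
    unfolding K_def using continuous_on_closed_Collect_le[OF assms(2) continuous_on_const assms(1)] .
  then have "compact K"
    using assms(4) by (simp add: K_def compact_eq_bounded_closed)
  moreover have "x\<^sub>0 \<in> K" "continuous_on K f"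
    using assms(3) continuous_on_subset[OF assms(2)] by (auto simp: K_def)
  ultimately obtain x where "x \<in> K" and min: "\<And>y. y \<in> K \<Longrightarrow> f x \<le> f y"
    using continuous_attains_inf[of K f] by blast
  have "f x \<le> f y" if "y \<in> S" for y
  proof (cases "f y \<le> f x\<^sub>0")
    case True
    with that min show ?thesis
      by (simp add: K_def)
  next
    case False
    with min[OF \<open>x\<^sub>0 \<in> K\<close>] show ?thesis
      by linarith
  qed
  moreover have "x \<in> S"
    using \<open>x \<in> K\<close> by (simp add: K_def)
  ultimately show ?thesis
    by (rule that[rotated])
qed

lemma dense_complement_hyperplanes:
  fixes B :: "'a::euclidean_space set"
  assumes "finite B" "0 \<notin> B"
  shows "closure {x. \<forall>b\<in>B. b \<bullet> x \<noteq> 0} = UNIV"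
proof -
  have "interior (\<Union>b\<in>B. {x. b \<bullet> x = 0}) = {}"
    using assms
  proof (induction B rule: finite_induct)
    case (insert b B)
    have "closed (\<Union>b\<in>B. {x. b \<bullet> x = 0})"
      using insert.hyps(1) by (simp add: closed_UN closed_hyperplane)
    then have "interior ((\<Union>b\<in>B. {x. b \<bullet> x = 0}) \<union> {x. b \<bullet> x = 0}) = {}"
      using insert by (simp add: interior_closed_Un_empty_interior)
    then show ?case
      by (simp add: Un_commute)
  qed simp
  moreover have "{x. \<forall>b\<in>B. b \<bullet> x \<noteq> 0} = - (\<Union>b\<in>B. {x. b \<bullet> x = 0})"
    by blast
  ultimately show ?thesis
    by (metis closure_complement Compl_empty_eq)
qed

lemma continuous_attains_inf_linear_image:
  fixes L :: "'a::euclidean_space \<Rightarrow> 'b::euclidean_space" and h :: "'b \<Rightarrow> real"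
  assumes "linear L" "subspace S" "continuous_on (L ` S) h" "x\<^sub>0 \<in> S"
    and "bounded {L x | x. x \<in> S \<and> h (L x) \<le> h (L x\<^sub>0)}"
  obtains x where "x \<in> S" "\<And>y. y \<in> S \<Longrightarrow> h (L x) \<le> h (L y)"
proof -
  have "subspace (L ` S)"
    using assms(1,2) by (rule linear_subspace_image)
  moreover have "{v \<in> L ` S. h v \<le> h (L x\<^sub>0)} = {L x | x. x \<in> S \<and> h (L x) \<le> h (L x\<^sub>0)}"
    by blast
  ultimately obtain v where "v \<in> L ` S" "\<And>w. w \<in> L ` S \<Longrightarrow> h v \<le> h w"
    using continuous_attains_inf_sublevel[of "L ` S" h "L x\<^sub>0"] assms(3-5) closed_subspace by auto
  with that show ?thesis
    by blast
qed

section \<open>The moment map in a common eigenbasis\<close>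

locale common_eigenbasis =
  fixes a :: "(real^'n^'n) set" and B :: "(real^'n) set"
  assumes subspace_a: "subspace a"
    and orthogonal_B: "pairwise orthogonal B"
    and norm_B: "\<forall>b\<in>B. norm b = 1"
    and span_B: "span B = UNIV"
    and eigenvector_B: "\<forall>b\<in>B. \<forall>\<xi>\<in>a. \<exists>c. \<xi> *v b = c *\<^sub>R b"
begin

lemma finite_B: "finite B"
  using pairwise_orthogonal_imp_finite[OF orthogonal_B] .

lemma inner_B: "b \<in> B \<Longrightarrow> b' \<in> B \<Longrightarrow> b \<bullet> b' = (if b = b' then 1 else 0)"
  using orthogonal_B norm_B by (auto simp: pairwise_def orthogonal_def norm_eq_1)

lemma basis_expansion: "(\<Sum>b\<in>B. (b \<bullet> x) *\<^sub>R b) = x"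
  using orthonormal_basis_expand[OF orthogonal_B _ _ finite_B, of x] norm_B span_B
  by (simp add: inner_commute)

lemma inner_basis_sum: "b' \<in> B \<Longrightarrow> b' \<bullet> (\<Sum>b\<in>B. f b *\<^sub>R b) = f b'"
  using finite_B by (simp add: inner_sum_right inner_B if_distrib[of "\<lambda>t. _ * t"] cong: if_cong)

lemma inner_self_eq_sum_B: "y \<bullet> y = (\<Sum>b\<in>B. (b \<bullet> y)\<^sup>2)"
proof -
  have "y \<bullet> y = (\<Sum>b\<in>B. (b \<bullet> y) *\<^sub>R b) \<bullet> y"
    by (simp add: basis_expansion)
  also have "\<dots> = (\<Sum>b\<in>B. (b \<bullet> y)\<^sup>2)"
    by (simp add: inner_sum_left power2_eq_square)
  finally show ?thesis .
qed

lemma norm_le_sum_abs_inner_B: "norm y \<le> (\<Sum>b\<in>B. \<bar>b \<bullet> y\<bar>)"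
proof -
  have "norm y = norm (\<Sum>b\<in>B. (b \<bullet> y) *\<^sub>R b)"
    by (simp add: basis_expansion)
  also have "\<dots> \<le> (\<Sum>b\<in>B. norm ((b \<bullet> y) *\<^sub>R b))"
    by (rule norm_sum)
  also have "\<dots> = (\<Sum>b\<in>B. \<bar>b \<bullet> y\<bar>)"
    using norm_B by (intro sum.cong) auto
  finally show ?thesis .
qed

lemma eigenvalue_B: "b \<in> B \<Longrightarrow> \<xi> \<in> a \<Longrightarrow> \<xi> *v b = (\<xi> \<bullet> outer b) *\<^sub>R b"
  using eigenvector_B inner_B[of b b] by (fastforce simp: inner_outer)

lemma mat_pow_eq_sum_outer:
  assumes "\<xi> \<in> a"
  shows "mat_pow \<xi> k = (\<Sum>b\<in>B. (\<xi> \<bullet> outer b) ^ k *\<^sub>R outer b)"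
proof (induction k)
  case 0
  show ?case
    by (simp add: matrix_eq sum_matrix_vector_mult outer_mult_vec basis_expansion)
next
  case (Suc k)
  show ?case
  proof (subst matrix_eq, intro allI)
    fix x
    have "mat_pow \<xi> (Suc k) *v x = \<xi> *v (\<Sum>b\<in>B. ((\<xi> \<bullet> outer b) ^ k * (b \<bullet> x)) *\<^sub>R b)"
      by (simp add: Suc matrix_vector_mul_assoc[symmetric] sum_matrix_vector_mult outer_mult_vec
          scaleR_matrix_vector_assoc[symmetric])
    also have "\<dots> = (\<Sum>b\<in>B. ((\<xi> \<bullet> outer b) ^ Suc k * (b \<bullet> x)) *\<^sub>R b)"
      using eigenvalue_B assms by (simp add: vec.sum matrix_vector_mult_scaleR mult_ac)
    finally show "mat_pow \<xi> (Suc k) *v x = (\<Sum>b\<in>B. (\<xi> \<bullet> outer b) ^ Suc k *\<^sub>R outer b) *v x"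
      by (simp add: sum_matrix_vector_mult outer_mult_vec scaleR_matrix_vector_assoc[symmetric])
  qed
qed

lemma mexp_eq_sum_outer:
  assumes "\<xi> \<in> a"
  shows "mexp \<xi> = (\<Sum>b\<in>B. exp (\<xi> \<bullet> outer b) *\<^sub>R outer b)"
proof -
  have "(\<lambda>k. (1 / fact k) *\<^sub>R mat_pow \<xi> k) = (\<lambda>k. \<Sum>b\<in>B. ((\<xi> \<bullet> outer b) ^ k /\<^sub>R fact k) *\<^sub>R outer b)"
    by (simp add: mat_pow_eq_sum_outer[OF assms] scaleR_sum_right divide_inverse_commute)
  moreover have "(\<lambda>k. \<Sum>b\<in>B. ((\<xi> \<bullet> outer b) ^ k /\<^sub>R fact k) *\<^sub>R outer b) sums (\<Sum>b\<in>B. exp (\<xi> \<bullet> outer b) *\<^sub>R outer b)"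
    by (intro sums_sum sums_scaleR_left exp_converges)
  ultimately show ?thesis
    unfolding mexp_def by (simp add: sums_iff)
qed

lemma inner_mexp_mult_vec:
  "b \<in> B \<Longrightarrow> \<xi> \<in> a \<Longrightarrow> b \<bullet> (mexp \<xi> *v x) = exp (\<xi> \<bullet> outer b) * (b \<bullet> x)"
  by (simp add: mexp_eq_sum_outer sum_matrix_vector_mult outer_mult_vec inner_basis_sum
      scaleR_matrix_vector_assoc[symmetric])

lemma inner_outer_expansion:
  assumes "\<xi> \<in> a"
  shows "\<xi> \<bullet> outer x = (\<Sum>b\<in>B. (b \<bullet> x)\<^sup>2 * (\<xi> \<bullet> outer b))"
proof -
  have "\<xi> *v x = (\<Sum>b\<in>B. ((b \<bullet> x) * (\<xi> \<bullet> outer b)) *\<^sub>R b)"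
    using eigenvalue_B assms basis_expansion[of x]
    by (metis (no_types, lifting) vec.sum matrix_vector_mult_scaleR scaleR_scaleR sum.cong)
  then show ?thesis
    by (simp add: inner_outer inner_sum_left inner_sum_right inner_commute[of _ x] power2_eq_square mult_ac)
qed

definition basis_support :: "real^'n \<Rightarrow> (real^'n) set" where
  "basis_support x = {b\<in>B. b \<bullet> x \<noteq> 0}"

lemma finite_basis_support: "finite (basis_support x)"
  using finite_B by (simp add: basis_support_def)

lemma moment_map_eq_sum_outer:
  "moment_map a x = restrict_functional a (\<Sum>b\<in>basis_support x. (b \<bullet> x)\<^sup>2 *\<^sub>R outer b)"
  unfolding moment_map_eq_restrict_outer restrict_functional_eq_iff
proof
  fix \<xi> assume "\<xi> \<in> a"
  have "outer x \<bullet> \<xi> = (\<Sum>b\<in>B. (b \<bullet> x)\<^sup>2 * (\<xi> \<bullet> outer b))"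
    by (subst inner_commute) (rule inner_outer_expansion[OF \<open>\<xi> \<in> a\<close>])
  also have "\<dots> = (\<Sum>b\<in>basis_support x. (b \<bullet> x)\<^sup>2 * (\<xi> \<bullet> outer b))"
    using finite_B by (intro sum.mono_neutral_right) (auto simp: basis_support_def)
  also have "\<dots> = (\<Sum>b\<in>basis_support x. (b \<bullet> x)\<^sup>2 *\<^sub>R outer b) \<bullet> \<xi>"
    by (simp add: inner_sum_right inner_commute[of _ \<xi>])
  finally show "outer x \<bullet> \<xi> = (\<Sum>b\<in>basis_support x. (b \<bullet> x)\<^sup>2 *\<^sub>R outer b) \<bullet> \<xi>" .
qed

definition weight_cone :: "(real^'n) set \<Rightarrow> (real^'n^'n \<Rightarrow> real) set" where
  "weight_cone K = restrict_functional a ` (convex_cone hull (outer ` K))"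

lemma weight_cone_mono: "K \<subseteq> K' \<Longrightarrow> weight_cone K \<subseteq> weight_cone K'"
  unfolding weight_cone_def by (intro image_mono hull_mono) blast

lemma moment_map_in_weight_cone: "moment_map a x \<in> weight_cone (basis_support x)"
  unfolding weight_cone_def moment_map_eq_sum_outer
    convex_cone_hull_image_finite[OF finite_basis_support]
  by (intro imageI CollectI exI[of _ "\<lambda>b. (b \<bullet> x)\<^sup>2"]) simp

lemma range_moment_map: "range (moment_map a) = weight_cone B"
proof
  show "range (moment_map a) \<subseteq> weight_cone B"
    using moment_map_in_weight_cone weight_cone_mono[of "basis_support _" B]
    by (auto simp: basis_support_def)
  show "weight_cone B \<subseteq> range (moment_map a)"
  proof
    fix f assume "f \<in> weight_cone B"
    then obtain u where u: "\<forall>b\<in>B. 0 \<le> u b" "f = restrict_functional a (\<Sum>b\<in>B. u b *\<^sub>R outer b)"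
      unfolding weight_cone_def convex_cone_hull_image_finite[OF finite_B] by blast
    define x where "x = (\<Sum>b\<in>B. sqrt (u b) *\<^sub>R b)"
    have sq: "(b \<bullet> x)\<^sup>2 = u b" if "b \<in> B" for b
      using that u(1) by (simp add: x_def inner_basis_sum)
    then have "(\<Sum>b\<in>basis_support x. (b \<bullet> x)\<^sup>2 *\<^sub>R outer b) = (\<Sum>b\<in>B. u b *\<^sub>R outer b)"
      using finite_B by (intro sum.mono_neutral_cong_left) (auto simp: basis_support_def simp flip: sq)
    then have "moment_map a x = restrict_functional a (\<Sum>b\<in>B. u b *\<^sub>R outer b)"
      by (simp add: moment_map_eq_sum_outer)
    with u(2) show "f \<in> range (moment_map a)"
      by (metis rangeI)
  qed
qed

lemma moment_map_orbit_closure_subset: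
  "moment_map a ` closure (orbit_A a x) \<subseteq> weight_cone (basis_support x)"
proof -
  define Z where "Z = (\<Inter>b\<in>B - basis_support x. {z. b \<bullet> z = 0})"
  have "closed Z"
    unfolding Z_def by (intro closed_INT) (simp add: closed_hyperplane)
  moreover have "orbit_A a x \<subseteq> Z"
    by (auto simp: orbit_A_def Z_def basis_support_def inner_mexp_mult_vec)
  ultimately have "closure (orbit_A a x) \<subseteq> Z"
    by (rule closure_minimal[rotated])
  moreover have "basis_support z \<subseteq> basis_support x" if "z \<in> Z" for z
    using that by (auto simp: Z_def basis_support_def)
  ultimately show ?thesis
    using moment_map_in_weight_cone weight_cone_mono by blast
qed

lemma basis_support_mexp_mult_vec: "\<xi> \<in> a \<Longrightarrow> basis_support (mexp \<xi> *v x) = basis_support x"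
  by (auto simp: basis_support_def inner_mexp_mult_vec)

lemma norm_mexp_mult_vec:
  assumes "\<xi> \<in> a"
  shows "(norm (mexp \<xi> *v x))\<^sup>2 = (\<Sum>b\<in>basis_support x. (b \<bullet> x)\<^sup>2 * exp (2 * (\<xi> \<bullet> outer b)))"
proof -
  have "(norm (mexp \<xi> *v x))\<^sup>2 = (\<Sum>b\<in>B. (b \<bullet> x)\<^sup>2 * exp (2 * (\<xi> \<bullet> outer b)))"
    unfolding power2_norm_eq_inner inner_self_eq_sum_B
    using assms by (intro sum.cong) (simp_all add: inner_mexp_mult_vec power_mult_distrib exp_double)
  also have "\<dots> = (\<Sum>b\<in>basis_support x. (b \<bullet> x)\<^sup>2 * exp (2 * (\<xi> \<bullet> outer b)))"
    using finite_B by (intro sum.mono_neutral_right) (auto simp: basis_support_def)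
  finally show ?thesis .
qed

lemma moment_map_mexp_mult_vec:
  assumes "\<xi> \<in> a"
  shows "moment_map a (mexp \<xi> *v x)
    = restrict_functional a (\<Sum>b\<in>basis_support x. ((b \<bullet> x)\<^sup>2 * exp (2 * (\<xi> \<bullet> outer b))) *\<^sub>R outer b)"
  unfolding moment_map_eq_sum_outer basis_support_mexp_mult_vec[OF assms]
  using assms by (intro arg_cong[where f = "restrict_functional a"] sum.cong)
    (simp_all add: basis_support_def inner_mexp_mult_vec power_mult_distrib exp_double)

lemma inner_mult_vec_sum_basis:
  assumes "K \<subseteq> B" "\<xi> \<in> a" "b \<in> B"
  shows "b \<bullet> (\<xi> *v (\<Sum>k\<in>K. k)) = (if b \<in> K then \<xi> \<bullet> outer b else 0)"
proof -
  have "finite K"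
    using assms(1) finite_B finite_subset by blast
  have "b \<bullet> (\<xi> *v (\<Sum>k\<in>K. k)) = (\<Sum>k\<in>K. (\<xi> \<bullet> outer k) * (b \<bullet> k))"
    using assms eigenvalue_B by (auto simp: vec.sum inner_sum_right intro!: sum.cong)
  also have "\<dots> = (\<Sum>k\<in>K. if k = b then \<xi> \<bullet> outer k else 0)"
    using assms inner_B by (intro sum.cong) auto
  finally show ?thesis
    using \<open>finite K\<close> by simp
qed

text \<open>A Kempf--Ness function: its critical points \<open>\<xi>\<close> are those with
  \<open>moment_map a (mexp \<xi> *v x) = restrict_functional a (\<Sum>b\<in>basis_support x. d b *\<^sub>R outer b)\<close>.\<close>
definition potential :: "(real^'n \<Rightarrow> real) \<Rightarrow> real^'n \<Rightarrow> real^'n^'n \<Rightarrow> real" where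
  "potential d x \<xi> = (\<Sum>b\<in>basis_support x. (b \<bullet> x)\<^sup>2 * exp (2 * (\<xi> \<bullet> outer b)) - 2 * d b * (\<xi> \<bullet> outer b))"

lemma potential_zero: "potential d x 0 = (norm x)\<^sup>2"
proof -
  have "(norm x)\<^sup>2 = (\<Sum>b\<in>B. (b \<bullet> x)\<^sup>2)"
    by (simp add: power2_norm_eq_inner inner_self_eq_sum_B)
  also have "\<dots> = (\<Sum>b\<in>basis_support x. (b \<bullet> x)\<^sup>2)"
    using finite_B by (intro sum.mono_neutral_right) (auto simp: basis_support_def)
  finally show ?thesis
    by (simp add: potential_def)
qed

lemma norm_mexp_mult_vec_le_potential:
  assumes "\<xi> \<in> a" "\<forall>b\<in>basis_support x. 0 \<le> d b"
  shows "(norm (mexp \<xi> *v x))\<^sup>2 \<le> 2 * potential d x \<xi> + 4 * (\<Sum>b\<in>basis_support x. (d b)\<^sup>2 / (b \<bullet> x)\<^sup>2)"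
proof -
  let ?E = "\<lambda>b. (b \<bullet> x)\<^sup>2 * exp (2 * (\<xi> \<bullet> outer b))" and ?D = "\<lambda>b. (d b)\<^sup>2 / (b \<bullet> x)\<^sup>2"
  have "(\<Sum>b\<in>basis_support x. ?E b / 2 - 2 * ?D b) \<le> potential d x \<xi>"
    unfolding potential_def using assms(2)
    by (intro sum_mono) (auto simp: basis_support_def intro: exp_minus_linear_lower_bound)
  moreover have "(\<Sum>b\<in>basis_support x. ?E b / 2 - 2 * ?D b)
      = (\<Sum>b\<in>basis_support x. ?E b) / 2 - 2 * (\<Sum>b\<in>basis_support x. ?D b)"
    by (simp add: sum_subtractf sum_divide_distrib sum_distrib_left)
  ultimately show ?thesis
    using norm_mexp_mult_vec[OF assms(1), of x] by linarith
qed

lemma potential_sublevel_bounded: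
  assumes "\<forall>b\<in>basis_support x. 0 < d b"
  shows "\<exists>R. \<forall>\<xi>\<in>a. \<forall>b\<in>basis_support x. potential d x \<xi> \<le> (norm x)\<^sup>2 \<longrightarrow> \<bar>\<xi> \<bullet> outer b\<bar> \<le> R b"
proof -
  define J where "J = basis_support x"
  define T where "T b s = (b \<bullet> x)\<^sup>2 * exp (2 * s) - 2 * d b * s" for b s
  define C where "C b = 2 * (d b)\<^sup>2 / (b \<bullet> x)\<^sup>2" for b
  define M where "M = (norm x)\<^sup>2 + (\<Sum>b\<in>J. C b)"
  have T_ge: "0 \<le> T b s + C b" if "b \<in> J" for b s
  proof -
    have "0 < (b \<bullet> x)\<^sup>2" "0 \<le> d b"
      using that assms by (auto simp: J_def basis_support_def less_imp_le)
    moreover have "0 \<le> (b \<bullet> x)\<^sup>2 * exp (2 * s)"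
      by simp
    ultimately show ?thesis
      using exp_minus_linear_lower_bound[of "(b \<bullet> x)\<^sup>2" "d b" s] unfolding T_def C_def by linarith
  qed
  have T_le: "T b (\<xi> \<bullet> outer b) \<le> M"
    if "b \<in> J" "potential d x \<xi> \<le> (norm x)\<^sup>2" for \<xi> b
  proof -
    have "0 \<le> C b"
      by (simp add: C_def)
    have "T b (\<xi> \<bullet> outer b) + C b \<le> (\<Sum>b\<in>J. T b (\<xi> \<bullet> outer b) + C b)"
      using that(1) T_ge finite_basis_support by (intro member_le_sum) (auto simp: J_def)
    also have "\<dots> \<le> M"
      using that(2) by (simp add: M_def sum.distrib potential_def T_def J_def)
    finally show ?thesis
      using \<open>0 \<le> C b\<close> by linarith
  qed
  have "\<forall>b\<in>J. \<exists>R. \<forall>s. T b s \<le> M \<longrightarrow> \<bar>s\<bar> \<le> R"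
    using assms unfolding T_def J_def basis_support_def
    by (auto intro!: exp_minus_linear_sublevel_bounded)
  from bchoice[OF this] obtain R where R: "\<forall>b\<in>J. \<forall>s. T b s \<le> M \<longrightarrow> \<bar>s\<bar> \<le> R b"
    by blast
  then show ?thesis
    using T_le unfolding J_def by blast
qed

lemma potential_attains_min:
  assumes "\<forall>b\<in>basis_support x. 0 < d b"
  obtains \<xi> where "\<xi> \<in> a" "\<And>\<eta>. \<eta> \<in> a \<Longrightarrow> potential d x \<xi> \<le> potential d x \<eta>"
proof -
  define J where "J = basis_support x"
  define u where "u = (\<Sum>b\<in>J. b)"
  define h where "h v = (\<Sum>b\<in>J. (b \<bullet> x)\<^sup>2 * exp (2 * (b \<bullet> v)) - 2 * d b * (b \<bullet> v))" for v
  \<comment> \<open>the potential only depends on \<open>\<xi> *v u\<close>, whose coordinates are the weights \<open>\<xi> \<bullet> outer b\<close>\<close>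
  have "J \<subseteq> B"
    by (auto simp: J_def basis_support_def)
  then have coord: "b \<bullet> (\<xi> *v u) = (if b \<in> J then \<xi> \<bullet> outer b else 0)" if "\<xi> \<in> a" "b \<in> B" for \<xi> b
    unfolding u_def using that by (rule inner_mult_vec_sum_basis)
  have h_eq: "h (\<xi> *v u) = potential d x \<xi>" if "\<xi> \<in> a" for \<xi>
    unfolding h_def potential_def J_def using coord[OF that] \<open>J \<subseteq> B\<close>
    by (intro sum.cong) (auto simp: J_def)
  obtain R where R: "\<forall>\<xi>\<in>a. \<forall>b\<in>J. potential d x \<xi> \<le> (norm x)\<^sup>2 \<longrightarrow> \<bar>\<xi> \<bullet> outer b\<bar> \<le> R b"
    using potential_sublevel_bounded[OF assms] unfolding J_def by blast
  have bounded: "bounded {\<xi> *v u | \<xi>. \<xi> \<in> a \<and> h (\<xi> *v u) \<le> h (0 *v u)}"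
  proof (rule boundedI, clarify)
    fix \<xi> assume "\<xi> \<in> a" "h (\<xi> *v u) \<le> h (0 *v u)"
    then have "potential d x \<xi> \<le> (norm x)\<^sup>2"
      using h_eq[OF \<open>\<xi> \<in> a\<close>] h_eq[OF subspace_0[OF subspace_a]] potential_zero[of d x] by simp
    have "norm (\<xi> *v u) \<le> (\<Sum>b\<in>B. \<bar>b \<bullet> (\<xi> *v u)\<bar>)"
      by (rule norm_le_sum_abs_inner_B)
    also have "\<dots> \<le> (\<Sum>b\<in>B. if b \<in> J then R b else 0)"
      using coord R \<open>\<xi> \<in> a\<close> \<open>potential d x \<xi> \<le> (norm x)\<^sup>2\<close> by (intro sum_mono) simp
    finally show "norm (\<xi> *v u) \<le> (\<Sum>b\<in>B. if b \<in> J then R b else 0)" .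
  qed
  have "linear (\<lambda>\<xi>::real^'n^'n. \<xi> *v u)"
    by (rule linearI) (simp_all add: matrix_vector_mult_add_rdistrib scaleR_matrix_vector_assoc)
  moreover have "continuous_on ((\<lambda>\<xi>. \<xi> *v u) ` a) h"
    unfolding h_def by (intro continuous_intros)
  ultimately obtain \<xi> where "\<xi> \<in> a" and min: "\<And>\<eta>. \<eta> \<in> a \<Longrightarrow> h (\<xi> *v u) \<le> h (\<eta> *v u)"
    using continuous_attains_inf_linear_image[OF _ subspace_a _ subspace_0[OF subspace_a] bounded] by blast
  have "potential d x \<xi> \<le> potential d x \<eta>" if "\<eta> \<in> a" for \<eta>
    using min[OF that] h_eq[OF that] h_eq[OF \<open>\<xi> \<in> a\<close>] by simp
  with \<open>\<xi> \<in> a\<close> show ?thesis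
    by (rule that)
qed

lemma potential_critical_point:
  assumes "\<xi> \<in> a" "\<And>\<zeta>. \<zeta> \<in> a \<Longrightarrow> potential d x \<xi> \<le> potential d x \<zeta>" "\<eta> \<in> a"
  shows "(\<Sum>b\<in>basis_support x. (b \<bullet> x)\<^sup>2 * exp (2 * (\<xi> \<bullet> outer b)) * (\<eta> \<bullet> outer b))
    = (\<Sum>b\<in>basis_support x. d b * (\<eta> \<bullet> outer b))"
proof -
  let ?J = "basis_support x"
  define f where "f t = potential d x (\<xi> + t *\<^sub>R \<eta>)" for t
  have "f = (\<lambda>t. \<Sum>b\<in>?J. (b \<bullet> x)\<^sup>2 * exp (2 * (\<xi> \<bullet> outer b + t * (\<eta> \<bullet> outer b)))
      - 2 * d b * (\<xi> \<bullet> outer b + t * (\<eta> \<bullet> outer b)))"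
    by (simp add: f_def potential_def inner_add_left fun_eq_iff)
  then have "(f has_real_derivative (\<Sum>b\<in>?J. (b \<bullet> x)\<^sup>2 * (exp (2 * (\<xi> \<bullet> outer b + 0 * (\<eta> \<bullet> outer b)))
      * (2 * (\<eta> \<bullet> outer b))) - 2 * d b * (\<eta> \<bullet> outer b))) (at 0)"
    by (auto intro!: derivative_eq_intros sum.cong simp: algebra_simps)
  moreover have "\<forall>t. \<bar>0 - t\<bar> < 1 \<longrightarrow> f 0 \<le> f t"
    using assms subspace_a by (auto simp: f_def subspace_add subspace_scale)
  ultimately have "(\<Sum>b\<in>?J. (b \<bullet> x)\<^sup>2 * (exp (2 * (\<xi> \<bullet> outer b + 0 * (\<eta> \<bullet> outer b)))
      * (2 * (\<eta> \<bullet> outer b))) - 2 * d b * (\<eta> \<bullet> outer b)) = 0"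
    by (rule DERIV_local_min[OF _ zero_less_one])
  then have "2 * ((\<Sum>b\<in>?J. (b \<bullet> x)\<^sup>2 * exp (2 * (\<xi> \<bullet> outer b)) * (\<eta> \<bullet> outer b))
      - (\<Sum>b\<in>?J. d b * (\<eta> \<bullet> outer b))) = 0"
    by (simp add: sum_subtractf sum_distrib_left algebra_simps)
  then show ?thesis
    by simp
qed

lemma moment_map_orbit_attains:
  assumes "\<forall>b\<in>basis_support x. 0 < d b"
  obtains y where "y \<in> orbit_A a x"
    "moment_map a y = restrict_functional a (\<Sum>b\<in>basis_support x. d b *\<^sub>R outer b)"
    "(norm y)\<^sup>2 \<le> 2 * (norm x)\<^sup>2 + 4 * (\<Sum>b\<in>basis_support x. (d b)\<^sup>2 / (b \<bullet> x)\<^sup>2)"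
proof -
  obtain \<xi> where "\<xi> \<in> a" and min: "\<And>\<eta>. \<eta> \<in> a \<Longrightarrow> potential d x \<xi> \<le> potential d x \<eta>"
    using potential_attains_min[OF assms] by blast
  have "mexp \<xi> *v x \<in> orbit_A a x"
    using \<open>\<xi> \<in> a\<close> by (auto simp: orbit_A_def)
  moreover have "moment_map a (mexp \<xi> *v x) = restrict_functional a (\<Sum>b\<in>basis_support x. d b *\<^sub>R outer b)"
    unfolding moment_map_mexp_mult_vec[OF \<open>\<xi> \<in> a\<close>] restrict_functional_eq_iff
    using potential_critical_point[OF \<open>\<xi> \<in> a\<close> min]
    by (simp add: inner_sum_left inner_commute[of "outer _"])
  moreover have "potential d x \<xi> \<le> (norm x)\<^sup>2"
    using min[of 0] subspace_0[OF subspace_a] by (simp add: potential_zero)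
  then have "(norm (mexp \<xi> *v x))\<^sup>2 \<le> 2 * (norm x)\<^sup>2 + 4 * (\<Sum>b\<in>basis_support x. (d b)\<^sup>2 / (b \<bullet> x)\<^sup>2)"
    using norm_mexp_mult_vec_le_potential[OF \<open>\<xi> \<in> a\<close>, of x d] assms by fastforce
  ultimately show ?thesis
    using that by blast
qed

lemma moment_map_orbit_bounded_approximants:
  assumes "\<forall>b\<in>basis_support x. 0 \<le> c b"
  obtains y R where "\<And>k. y k \<in> orbit_A a x" "\<And>k. norm (y k) \<le> R"
    "\<And>k. moment_map a (y k)
      = restrict_functional a (\<Sum>b\<in>basis_support x. (c b + 1 / real (Suc k)) *\<^sub>R outer b)"
proof -
  let ?J = "basis_support x"
  define R where "R = 2 * (norm x)\<^sup>2 + 4 * (\<Sum>b\<in>?J. (c b + 1)\<^sup>2 / (b \<bullet> x)\<^sup>2)"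
  have "\<exists>y. y \<in> orbit_A a x \<and> norm y \<le> sqrt R \<and>
      moment_map a y = restrict_functional a (\<Sum>b\<in>?J. (c b + 1 / real (Suc k)) *\<^sub>R outer b)" for k
  proof -
    have "\<forall>b\<in>?J. 0 < c b + 1 / real (Suc k)"
      using assms by (simp add: add_nonneg_pos)
    then obtain y where "y \<in> orbit_A a x"
      "moment_map a y = restrict_functional a (\<Sum>b\<in>?J. (c b + 1 / real (Suc k)) *\<^sub>R outer b)"
      and y_le: "(norm y)\<^sup>2 \<le> 2 * (norm x)\<^sup>2 + 4 * (\<Sum>b\<in>?J. (c b + 1 / real (Suc k))\<^sup>2 / (b \<bullet> x)\<^sup>2)"
      using moment_map_orbit_attains[of x "\<lambda>b. c b + 1 / real (Suc k)"] by blast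
    moreover have "(\<Sum>b\<in>?J. (c b + 1 / real (Suc k))\<^sup>2 / (b \<bullet> x)\<^sup>2) \<le> (\<Sum>b\<in>?J. (c b + 1)\<^sup>2 / (b \<bullet> x)\<^sup>2)"
      using assms by (intro sum_mono divide_right_mono power_mono) auto
    with y_le have "norm y \<le> sqrt R"
      unfolding R_def by (intro real_le_rsqrt) linarith
    ultimately show ?thesis
      by blast
  qed
  then obtain y where "\<And>k. y k \<in> orbit_A a x \<and> norm (y k) \<le> sqrt R \<and>
      moment_map a (y k) = restrict_functional a (\<Sum>b\<in>?J. (c b + 1 / real (Suc k)) *\<^sub>R outer b)"
    by metis
  then show ?thesis
    by (intro that[of y "sqrt R"]) simp_all
qed

lemma weight_cone_subset_moment_map_orbit_closure:
  "weight_cone (basis_support x) \<subseteq> moment_map a ` closure (orbit_A a x)"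
proof
  let ?J = "basis_support x"
  fix f assume "f \<in> weight_cone ?J"
  then obtain c where c: "\<forall>b\<in>?J. 0 \<le> c b" "f = restrict_functional a (\<Sum>b\<in>?J. c b *\<^sub>R outer b)"
    unfolding weight_cone_def convex_cone_hull_image_finite[OF finite_basis_support] by blast
  \<comment> \<open>approximate \<open>c\<close> by strictly positive weights, which are attained on the orbit\<close>
  obtain y R where y_orbit: "\<And>k. y k \<in> orbit_A a x" and "\<And>k. norm (y k) \<le> R"
    and y_moment: "\<And>k. moment_map a (y k) = restrict_functional a (\<Sum>b\<in>?J. (c b + 1 / real (Suc k)) *\<^sub>R outer b)"
    using moment_map_orbit_bounded_approximants[OF c(1)] by blast
  then have "\<forall>k. y k \<in> cball 0 R"
    by simp
  then obtain l r where "strict_mono r" and lim: "(y \<circ> r) \<longlonglongrightarrow> l"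
    using compact_imp_seq_compact[OF compact_cball, of 0 R] unfolding seq_compact_def by blast
  then have "l \<in> closure (orbit_A a x)"
    unfolding closure_sequential using y_orbit by (intro exI[of _ "y \<circ> r"]) auto
  moreover have "moment_map a l \<eta> = f \<eta>" for \<eta>
  proof (cases "\<eta> \<in> a")
    case True
    have "(\<lambda>k. 1 / real (Suc k)) \<longlonglongrightarrow> 0"
      using LIMSEQ_inverse_real_of_nat by (simp add: inverse_eq_divide)
    from LIMSEQ_subseq_LIMSEQ[OF this \<open>strict_mono r\<close>]
    have "(\<lambda>k. 1 / real (Suc (r k))) \<longlonglongrightarrow> 0"
      by (simp add: o_def)
    then have "(\<lambda>k. \<Sum>b\<in>?J. (c b + 1 / real (Suc (r k))) * (outer b \<bullet> \<eta>)) \<longlonglongrightarrow> (\<Sum>b\<in>?J. (c b + 0) * (outer b \<bullet> \<eta>))"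
      by (intro tendsto_intros)
    moreover have "(\<lambda>k. moment_map a (y (r k)) \<eta>) \<longlonglongrightarrow> moment_map a l \<eta>"
      using tendsto_moment_map[OF lim] by (simp add: o_def)
    ultimately show ?thesis
      using True LIMSEQ_unique by (simp add: y_moment c(2) restrict_functional_def inner_sum_left)
  next
    case False
    then show ?thesis
      by (simp add: c(2) moment_map_def restrict_functional_def)
  qed
  ultimately show "f \<in> moment_map a ` closure (orbit_A a x)"
    by (metis ext image_eqI)
qed

lemma moment_map_orbit_closure:
  "moment_map a ` closure (orbit_A a x) = weight_cone (basis_support x)"
  using moment_map_orbit_closure_subset weight_cone_subset_moment_map_orbit_closure by (rule subset_antisym)

lemma polyhedral_range_moment_map: "polyhedral_dual a (range (moment_map a))"
  unfolding range_moment_map weight_cone_def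
  using subspace_a finite_B by (intro polyhedral_dual_restrict_convex_cone_hull) simp_all

lemma open_full_orbit_image: "open {x. moment_map a ` closure (orbit_A a x) = range (moment_map a)}"
proof -
  define U where "U = {x. weight_cone (basis_support x) = weight_cone B}"
  have "\<exists>T. open T \<and> x \<in> T \<and> T \<subseteq> U" if "x \<in> U" for x
  proof -
    define T where "T = (\<Inter>b\<in>basis_support x. - {y. b \<bullet> y = 0})"
    have "open T"
      unfolding T_def using finite_basis_support by (intro open_INT) (simp_all add: closed_hyperplane open_Compl)
    moreover have "x \<in> T"
      by (auto simp: T_def basis_support_def)
    moreover have "T \<subseteq> U"
    proof
      fix y assume "y \<in> T"
      then have "basis_support x \<subseteq> basis_support y" "basis_support y \<subseteq> B"
        by (auto simp: T_def basis_support_def)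
      then show "y \<in> U"
        using \<open>x \<in> U\<close> weight_cone_mono by (simp add: U_def) blast
    qed
    ultimately show ?thesis
      by blast
  qed
  then have "open U"
    by (subst open_subopen) blast
  then show ?thesis
    by (simp add: U_def moment_map_orbit_closure range_moment_map)
qed

lemma dense_full_orbit_image: "closure {x. moment_map a ` closure (orbit_A a x) = range (moment_map a)} = UNIV"
proof -
  have "basis_support x = B" if "\<forall>b\<in>B. b \<bullet> x \<noteq> 0" for x
    using that by (auto simp: basis_support_def)
  then have "{x. \<forall>b\<in>B. b \<bullet> x \<noteq> 0} \<subseteq> {x. moment_map a ` closure (orbit_A a x) = range (moment_map a)}"
    by (auto simp: moment_map_orbit_closure range_moment_map)
  moreover have "0 \<notin> B"
    using norm_B by auto
  ultimately show ?thesis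
    using closure_mono dense_complement_hyperplanes[OF finite_B] by blast
qed

end

theorem mainTheorem6:
  fixes a :: "(real^'n^'n) set"
  assumes "subspace a"
    and "\<forall>\<xi>\<in>a. transpose \<xi> = \<xi>"
    and "\<forall>\<xi>\<in>a. \<forall>\<eta>\<in>a. \<xi> ** \<eta> = \<eta> ** \<xi>"
  shows "polyhedral_dual a (range (moment_map a))
       \<and> open {x. moment_map a ` closure (orbit_A a x) = range (moment_map a)}
       \<and> closure {x. moment_map a ` closure (orbit_A a x) = range (moment_map a)} = UNIV"
proof -
  obtain B where "pairwise orthogonal B" "\<forall>b\<in>B. norm b = 1" "span B = UNIV"
    "\<forall>b\<in>B. \<forall>\<xi>\<in>a. \<exists>c. \<xi> *v b = c *\<^sub>R b"
    by (rule commuting_symmetric_matrices_eigenbasis[OF assms(2,3)])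
  with assms(1) interpret common_eigenbasis a B
    by unfold_locales
  show ?thesis
    using polyhedral_range_moment_map open_full_orbit_image dense_full_orbit_image by blast
qed

end
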